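(* Let $\ell$ and $s$ be positive integers. If a partial $(n,k,t)_\lambda$-system has an $\ell$-presequencing with $s$ classes, then it has a nondeficient $\ell$-presequencing with $s$ classes, provided that \[ n > \lambda\left(2\binom{2\ell-3}{t}-\binom{\ell-2}{t}\right)\binom{k-1}{t}^{-1}+(2s-1)(\ell-1)-1. \]
   Context: For positive integers $n,k,t,\lambda$ with $n \geq k > t \geq 2$, a partial $(n,k,t)_\lambda$-system is a pair $(X,\mathcal{B})$ where $X$ is an $n$-set of vertices and $\mathcal{B}$ is a collection of $k$-subsets of $X$ (blocks) such that each $t$-subset of $X$ is contained in at most $\lambda$ blocks. An independent set is a subset of $X$ containing no block. An $\ell$-buffered set is a triple $(S,S^{L},S^{R})$ with $S^{L},S^{R}\subseteq S$ (buffers) such that: (B1) if $|S|\le \ell-2$ then $S^{L}=S^{R}=S$; (B2) if $\ell-1\le |S|\le 2\ell-2$ then $|S^{L}|=|S^{R}|=\ell-1$ and $S^{L}\cup S^{R}=S$; (B3) if $|S|\ge 2\ell-1$ then $|S^{L}|=|S^{R}|=\ell-1$ and $S^{L}\cap S^{R}=\emptyset$. It is deficient if $|S|\le \ell-2$ and nondeficient otherwise. An $\ell$-presequencing of $(X,\mathcal{B})$ is a tuple $(X_0,\ldots,X_{s-1})$ of $\ell$-buffered sets (classes) whose underlying sets partition $X$, such that (P1) each $X_i$ is independent, and (P2) for each $i\in\mathbb{Z}_s$, $X_i^{R}\cup X_{i+1}^{L}$ is independent (indices mod $s$). It is nondeficient if every class is nondeficient. Binomial coefficients $\binom{a}{t}$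 with $0\le a<t$ equal $0$. *)

theory Defs
  imports Complex_Main "HOL-Library.Multiset"
begin

definition partial_system ::
  "nat \<Rightarrow> nat \<Rightarrow> nat \<Rightarrow> nat \<Rightarrow> 'a set \<Rightarrow> 'a set multiset \<Rightarrow> bool" where
  "partial_system n k t lam X B \<longleftrightarrow>
     finite X \<and> card X = n \<and>
     (\<forall>b\<in>#B. b \<subseteq> X \<and> card b = k) \<and>
     (\<forall>T. T \<subseteq> X \<and> card T = t \<longrightarrow> size (filter_mset (\<lambda>b. T \<subseteq> b) B) \<le> lam)"

definition independent :: "'a set \<Rightarrow> 'a set multiset \<Rightarrow> 'a set \<Rightarrow> bool" where
  "independent X B I \<longleftrightarrow> I \<subseteq> X \<and> (\<forall>b\<in>#B. \<not> b \<subseteq> I)"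

definition buffered_set :: "nat \<Rightarrow> 'a set \<times> 'a set \<times> 'a set \<Rightarrow> bool" where
  "buffered_set l C \<longleftrightarrow> (case C of (S, SL, SR) \<Rightarrow>
     finite S \<and> SL \<subseteq> S \<and> SR \<subseteq> S \<and>
     (int (card S) \<le> int l - 2 \<longrightarrow> SL = S \<and> SR = S) \<and>
     (int l - 1 \<le> int (card S) \<and> int (card S) \<le> 2 * int l - 2 \<longrightarrow>
        int (card SL) = int l - 1 \<and> int (card SR) = int l - 1 \<and> SL \<union> SR = S) \<and>
     (2 * int l - 1 \<le> int (card S) \<longrightarrow>
        int (card SL) = int l - 1 \<and> int (card SR) = int l - 1 \<and> SL \<inter> SR = {}))"

definition deficient :: "nat \<Rightarrow> 'a set \<times> 'a set \<times> 'a set \<Rightarrow> bool" where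
  "deficient l C \<longleftrightarrow> int (card (fst C)) \<le> int l - 2"

text \<open>An l-presequencing with s classes, given as a list P of length s; indices mod s.\<close>
definition presequencing ::
  "nat \<Rightarrow> 'a set \<Rightarrow> 'a set multiset \<Rightarrow> ('a set \<times> 'a set \<times> 'a set) list \<Rightarrow> bool" where
  "presequencing l X B P \<longleftrightarrow>
     (let s = length P in
       (\<forall>i<s. buffered_set l (P ! i)) \<and>
       (\<Union>i<s. fst (P ! i)) = X \<and>
       (\<forall>i<s. \<forall>j<s. i \<noteq> j \<longrightarrow> fst (P ! i) \<inter> fst (P ! j) = {}) \<and>
       (\<forall>i<s. independent X B (fst (P ! i))) \<and>
       (\<forall>i<s. independent X B (snd (snd (P ! i)) \<union> fst (snd (P ! ((i + 1) mod s))))))"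

definition nondeficient_presequencing ::
  "nat \<Rightarrow> 'a set \<Rightarrow> 'a set multiset \<Rightarrow> ('a set \<times> 'a set \<times> 'a set) list \<Rightarrow> bool" where
  "nondeficient_presequencing l X B P \<longleftrightarrow>
     presequencing l X B P \<and> (\<forall>i<length P. \<not> deficient l (P ! i))"

end

theory Submission
  imports Defs
begin

text \<open>
  Among all l-presequencings with s classes take one of least total deficiency, and suppose its
  class X_i is deficient; then both buffers of X_i are X_i itself. Let W1 be X_i together with the
  right buffer of the preceding class and W2 be X_i together with the left buffer of the following
  class: both are independent, contain X_i and have at most l - 1 + |X_i| vertices. A vertex x
  outside W1 \<union> W2 for which W1 + x or W2 + x is not independent lies in a block b \<subseteq> W + x,
  and b - {x} contains C(k-1,t) of the at most 2 C(2l-3,t) - C(l-2,t) t-subsets of W1 or W2.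
  Each t-set lies in at most \<lambda> blocks, so there are at most
  \<lambda> (2 C(2l-3,t) - C(l-2,t)) / C(k-1,t) such vertices. On the other hand, at least
  n - (l - 2) - (s - 1)(2l - 2) vertices of the other classes lie in neither buffer of their class,
  and the hypothesis on n says that these are more. Moving one of them that is not excluded into
  X_i yields a presequencing (its old class has at least 2l - 1 vertices, so its buffers remain
  valid) of smaller total deficiency.
\<close>

section \<open>Counting blocks through t-subsets\<close>

text \<open>Monotonicity of D \<mapsto> C(m + D, t) - C(D, t), stated without subtraction.\<close>

lemma choose_shift_diff_mono:
  assumes "d \<le> D"
  shows "((m + d) choose t) + (D choose t) \<le> ((m + D) choose t) + (d choose t)"
  using assms
proof (induction D rule: dec_induct)
  case base
  then show ?case by simp
next
  case (step D)
  show ?case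
  proof (cases t)
    case 0
    then show ?thesis by simp
  next
    case (Suc u)
    have "(Suc D choose t) = (D choose t) + (D choose u)"
      and "((m + Suc D) choose t) = ((m + D) choose t) + ((m + D) choose u)"
      using Suc by simp_all
    moreover have "(D choose u) \<le> ((m + D) choose u)"
      by (rule binomial_right_mono) simp
    ultimately show ?thesis
      using step.IH by linarith
  qed
qed

lemma card_subsets_Un_le:
  assumes "finite W1" "finite W2" "S \<subseteq> W1 \<inter> W2"
    and "card W1 \<le> m + card S" "card W2 \<le> m + card S" "card S \<le> D"
  shows "card {T. card T = t \<and> (T \<subseteq> W1 \<or> T \<subseteq> W2)} + (D choose t) \<le> 2 * ((m + D) choose t)"
proof -
  define F where "F W = {T. T \<subseteq> W \<and> card T = t}" for W :: "'a set"
  have card_F: "card (F W) = card W choose t" if "finite W" for W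
    unfolding F_def using n_subsets[OF that] .
  have fin_F: "finite (F W)" if "finite W" for W
    unfolding F_def using that by simp
  have card_F_le: "card (F W) \<le> (m + card S) choose t" if "finite W" "card W \<le> m + card S" for W
    using that card_F binomial_right_mono by simp
  have "card (F W1 \<union> F W2) + card (F W1 \<inter> F W2) = card (F W1) + card (F W2)"
    using card_Un_Int[OF fin_F fin_F, OF assms(1,2)] by simp
  moreover have "card (F W1 \<inter> F W2) \<ge> card S choose t"
  proof -
    have "F W1 \<inter> F W2 = F (W1 \<inter> W2)"
      unfolding F_def by auto
    moreover have "card S \<le> card (W1 \<inter> W2)"
      using assms(1,3) by (intro card_mono) auto
    ultimately show ?thesis
      using assms(1) card_F[of "W1 \<inter> W2"] binomial_right_mono by simp
  qed
  moreover have "card (F W1) \<le> (m + card S) choose t" "card (F W2) \<le> (m + card S) choose t"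
    using card_F_le assms(1,2,4,5) by blast+
  moreover have "((m + card S) choose t) \<le> ((m + D) choose t)"
    using assms(6) by (intro binomial_right_mono) simp
  moreover have "((m + card S) choose t) + (D choose t) \<le> ((m + D) choose t) + (card S choose t)"
    using assms(6) by (rule choose_shift_diff_mono)
  ultimately have "card (F W1 \<union> F W2) + (D choose t) \<le> 2 * ((m + D) choose t)"
    by linarith
  moreover have "{T. card T = t \<and> (T \<subseteq> W1 \<or> T \<subseteq> W2)} = F W1 \<union> F W2"
    unfolding F_def by auto
  ultimately show ?thesis
    by simp
qed

lemma card_set_mset_le_size: "card (set_mset M) \<le> size M"
  by (induction M) (auto simp: card_insert_if)

lemma card_blocks_mult_le:
  assumes ps: "partial_system n k t lam X B"
    and "finite \<T>" "\<forall>T\<in>\<T>. T \<subseteq> X \<and> card T = t"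
    and "BB \<subseteq> set_mset B" "\<forall>b\<in>BB. r \<le> card {T\<in>\<T>. T \<subseteq> b}"
  shows "card BB * r \<le> card \<T> * lam"
proof -
  have fin_BB: "finite BB"
    using assms(4) finite_subset by blast
  have blocks_through: "card {b\<in>BB. T \<subseteq> b} \<le> lam" if "T \<in> \<T>" for T
  proof -
    have "card {b\<in>BB. T \<subseteq> b} \<le> card (set_mset (filter_mset (\<lambda>b. T \<subseteq> b) B))"
      using assms(4) by (intro card_mono) auto
    also have "\<dots> \<le> size (filter_mset (\<lambda>b. T \<subseteq> b) B)"
      by (rule card_set_mset_le_size)
    also have "\<dots> \<le> lam"
      using ps assms(3) that unfolding partial_system_def by auto
    finally show ?thesis .
  qed
  have "card BB * r \<le> (\<Sum>b\<in>BB. card {T\<in>\<T>. T \<subseteq> b})"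
    using sum_mono[of BB "\<lambda>_. r"] assms(5) by simp
  also have "\<dots> = (\<Sum>T\<in>\<T>. card {b\<in>BB. T \<subseteq> b})"
    using sum.swap_restrict[OF fin_BB assms(2), of "\<lambda>_ _. 1 :: nat" "\<lambda>b T. T \<subseteq> b"] by simp
  also have "\<dots> \<le> card \<T> * lam"
    using sum_bounded_above[of \<T> _ lam] blocks_through by simp
  finally show ?thesis .
qed

lemma card_dependent_extensions_le:
  assumes ps: "partial_system n k t lam X B" and indep: "\<forall>W\<in>\<W>. independent X B W"
  shows "card {x \<in> X - \<Union>\<W>. \<exists>W\<in>\<W>. \<not> independent X B (insert x W)} * ((k - 1) choose t)
    \<le> card {T. card T = t \<and> (\<exists>W\<in>\<W>. T \<subseteq> W)} * lam"
proof -
  \<comment> \<open>A witnessing block determines x as its only vertex outside \<Union>\<W>.\<close>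
  define BB where "BB = {b \<in> set_mset B. \<exists>x \<in> X - \<Union>\<W>. \<exists>W\<in>\<W>. x \<in> b \<and> b \<subseteq> insert x W}"
  define \<T> where "\<T> = {T. card T = t \<and> (\<exists>W\<in>\<W>. T \<subseteq> W)}"
  have fin_X: "finite X" and W_X: "\<Union>\<W> \<subseteq> X"
    using ps indep unfolding partial_system_def independent_def by auto
  have "finite \<T>"
    using W_X fin_X by (intro finite_subset[of \<T> "Pow X"]) (auto simp: \<T>_def)
  have "{x \<in> X - \<Union>\<W>. \<exists>W\<in>\<W>. \<not> independent X B (insert x W)} \<subseteq> (\<lambda>b. the_elem (b - \<Union>\<W>)) ` BB"
  proof
    fix x assume "x \<in> {x \<in> X - \<Union>\<W>. \<exists>W\<in>\<W>. \<not> independent X B (insert x W)}"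
    then obtain W b where x: "x \<in> X - \<Union>\<W>" and W: "W \<in> \<W>" and b: "b \<in># B" "b \<subseteq> insert x W"
      using W_X by (auto simp: independent_def)
    have "x \<in> b"
      using indep W b subset_insert unfolding independent_def by metis
    then have "b \<in> BB" and "b - \<Union>\<W> = {x}"
      using x W b unfolding BB_def by auto
    then show "x \<in> (\<lambda>b. the_elem (b - \<Union>\<W>)) ` BB"
      by (metis image_eqI the_elem_eq)
  qed
  moreover have "finite BB"
    unfolding BB_def by simp
  ultimately have "card {x \<in> X - \<Union>\<W>. \<exists>W\<in>\<W>. \<not> independent X B (insert x W)} \<le> card BB"
    by (meson card_image_le card_mono finite_imageI le_trans)
  moreover have "card BB * ((k - 1) choose t) \<le> card \<T> * lam"
  proof (rule card_blocks_mult_le[OF ps \<open>finite \<T>\<close>])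
    show "\<forall>T\<in>\<T>. T \<subseteq> X \<and> card T = t" "BB \<subseteq> set_mset B"
      using W_X unfolding \<T>_def BB_def by auto
    show "\<forall>b\<in>BB. (k - 1) choose t \<le> card {T\<in>\<T>. T \<subseteq> b}"
    proof
      fix b assume "b \<in> BB"
      then obtain x W where b: "b \<in># B" "x \<in> b" "W \<in> \<W>" "b \<subseteq> insert x W"
        unfolding BB_def by blast
      then have "b \<subseteq> X" "card b = k"
        using ps unfolding partial_system_def by auto
      then have card_eq: "card {T. T \<subseteq> b - {x} \<and> card T = t} = (k - 1) choose t"
        using n_subsets[of "b - {x}" t] finite_subset[OF _ fin_X] b(2) by simp
      have "{T. T \<subseteq> b - {x} \<and> card T = t} \<subseteq> {T\<in>\<T>. T \<subseteq> b}"
        using b unfolding \<T>_def by auto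
      then show "(k - 1) choose t \<le> card {T\<in>\<T>. T \<subseteq> b}"
        using card_mono[of "{T\<in>\<T>. T \<subseteq> b}"] \<open>finite \<T>\<close> unfolding card_eq[symmetric] by simp
    qed
  qed
  ultimately show ?thesis
    unfolding \<T>_def using le_trans mult_le_mono1 by blast
qed

section \<open>Buffered sets and presequencings\<close>

lemma deficient_iff: "deficient l C \<longleftrightarrow> card (fst C) + 2 \<le> l"
  unfolding deficient_def by linarith

lemma buffered_setD:
  assumes "buffered_set l (S, L, R)"
  shows "finite S" "L \<subseteq> S" "R \<subseteq> S"
  using assms unfolding buffered_set_def by auto

lemma buffered_set_card_buffers:
  assumes "buffered_set l (S, L, R)"
  shows "card L < l" "card R < l"
  using assms unfolding buffered_set_def by (auto split: if_splits)

lemma buffered_set_deficient: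
  assumes "buffered_set l (S, L, R)" "card S + 2 \<le> l"
  shows "L = S" "R = S"
  using assms unfolding buffered_set_def by auto

lemma buffered_set_small:
  assumes "finite S" "card S < l"
  shows "buffered_set l (S, S, S)"
  using assms unfolding buffered_set_def by auto

lemma buffered_set_remove_unbuffered:
  assumes buf: "buffered_set l (S, L, R)" and x: "x \<in> S - (L \<union> R)"
  shows "2 * l \<le> card S + 1" and "buffered_set l (S - {x}, L, R)"
proof -
  have fin: "finite S" and sub: "L \<union> R \<subseteq> S - {x}"
    using buffered_setD[OF buf] x by auto
  have large: "2 * int l - 1 \<le> int (card S)" and card_L: "card L + 1 = l" and card_R: "card R + 1 = l"
    and disj: "L \<inter> R = {}"
    using buf x unfolding buffered_set_def by (auto split: if_splits)
  then show "2 * l \<le> card S + 1"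
    by linarith
  have card_Diff: "card (S - {x}) + 1 = card S"
    using card_Suc_Diff1[OF fin] x by (metis DiffD1 Suc_eq_plus1)
  have "card (L \<union> R) = card L + card R"
    using fin sub disj by (meson card_Un_disjoint finite_Diff finite_subset le_sup_iff)
  moreover have "card L + card R = card (S - {x})" if "int (card (S - {x})) \<le> 2 * int l - 2"
    using that card_L card_R card_Diff large by linarith
  ultimately have "L \<union> R = S - {x}" if "int (card (S - {x})) \<le> 2 * int l - 2"
    using card_subset_eq[OF _ sub] fin that by simp
  then show "buffered_set l (S - {x}, L, R)"
    using buf sub card_Diff card_L card_R large disj fin unfolding buffered_set_def by auto
qed

lemma independent_subset: "independent X B I \<Longrightarrow> J \<subseteq> I \<Longrightarrow> independent X B J"
  unfolding independent_def by blast

definition unbuffered :: "'a set \<times> 'a set \<times> 'a set \<Rightarrow> 'a set" where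
  "unbuffered C = (case C of (S, L, R) \<Rightarrow> S - (L \<union> R))"

text \<open>With truncated subtraction, the summand of a class is positive exactly when it is deficient.\<close>

definition deficiency :: "nat \<Rightarrow> ('a set \<times> 'a set \<times> 'a set) list \<Rightarrow> nat" where
  "deficiency l P = (\<Sum>m<length P. l - 1 - card (fst (P ! m)))"

lemma unbuffered_subset: "unbuffered C \<subseteq> fst C"
  unfolding unbuffered_def by (auto split: prod.split)

lemma presequencingD:
  assumes "presequencing l X B P" "m < length P"
  shows "buffered_set l (P ! m)" "fst (P ! m) \<subseteq> X" "independent X B (fst (P ! m))"
    "independent X B (snd (snd (P ! m)) \<union> fst (snd (P ! ((m + 1) mod length P))))"
  using assms unfolding presequencing_def Let_def independent_def by auto

lemma presequencing_card_buffers: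
  assumes "presequencing l X B P" "m < length P"
  shows "card (fst (snd (P ! m))) < l" "card (snd (snd (P ! m))) < l"
  using buffered_set_card_buffers presequencingD(1)[OF assms] by (metis prod.collapse)+

lemma presequencing_partition:
  assumes "presequencing l X B P"
  shows "(\<Union>m<length P. fst (P ! m)) = X"
    "\<forall>m<length P. \<forall>m'<length P. m \<noteq> m' \<longrightarrow> fst (P ! m) \<inter> fst (P ! m') = {}"
  using assms unfolding presequencing_def Let_def by auto

lemma unbuffered_notin_other_classes:
  assumes pre: "presequencing l X B P" and j: "j < length P" and x: "x \<in> unbuffered (P ! j)"
    and m: "m < length P"
  shows "x \<notin> fst (snd (P ! m)) \<union> snd (snd (P ! m))" and "m \<noteq> j \<Longrightarrow> x \<notin> fst (P ! m)"
proof -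
  have buf: "buffered_set l (fst (P ! m), fst (snd (P ! m)), snd (snd (P ! m)))"
    using presequencingD(1)[OF pre m] by simp
  have x_j: "x \<in> fst (P ! j)" "x \<notin> fst (snd (P ! j)) \<union> snd (snd (P ! j))"
    using x unfolding unbuffered_def by (auto split: prod.split)
  show other: "x \<notin> fst (P ! m)" if "m \<noteq> j"
    using presequencing_partition(2)[OF pre] m j that x_j(1) by blast
  show "x \<notin> fst (snd (P ! m)) \<union> snd (snd (P ! m))"
    using buffered_setD(2,3)[OF buf] other x_j(2) by (cases "m = j") auto
qed

lemma card_le_card_unbuffered:
  assumes pre: "presequencing l X B P" and i: "i < length P"
  shows "card X \<le> card (\<Union>m\<in>{..<length P} - {i}. unbuffered (P ! m)) + card (fst (P ! i))
    + (length P - 1) * (2 * (l - 1))"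
proof -
  define J where "J = {..<length P} - {i}"
  have buf: "buffered_set l (fst (P ! m), fst (snd (P ! m)), snd (snd (P ! m)))" if "m < length P" for m
    using presequencingD(1)[OF pre that] by simp
  note fin = buffered_setD(1)[OF buf]
  note part = presequencing_partition[OF pre]
  have class_le: "card (fst (P ! m)) \<le> card (unbuffered (P ! m)) + 2 * (l - 1)" if "m \<in> J" for m
  proof -
    have m: "m < length P"
      using that unfolding J_def by simp
    obtain S L R where Pm: "P ! m = (S, L, R)"
      by (cases "P ! m") auto
    have "buffered_set l (S, L, R)"
      using buf[OF m] Pm by simp
    note LR = buffered_setD(2,3)[OF this] buffered_set_card_buffers[OF this]
    have "card S \<le> card (S - (L \<union> R)) + card (L \<union> R)"
      using card_Un_le[of "S - (L \<union> R)" "L \<union> R"] LR by (simp add: Un_absorb2)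
    moreover have "fst (P ! m) = S" "unbuffered (P ! m) = S - (L \<union> R)"
      using Pm unfolding unbuffered_def by simp_all
    ultimately show ?thesis
      using card_Un_le[of L R] LR(3,4) by simp
  qed
  have "card X = (\<Sum>m<length P. card (fst (P ! m)))"
    using card_UN_disjoint[of "{..<length P}" "\<lambda>m. fst (P ! m)"] fin part by simp
  moreover have "(\<Sum>m<length P. card (fst (P ! m))) = card (fst (P ! i)) + (\<Sum>m\<in>J. card (fst (P ! m)))"
    unfolding J_def using i by (simp add: sum.remove)
  moreover have "(\<Sum>m\<in>J. card (fst (P ! m))) \<le> (\<Sum>m\<in>J. card (unbuffered (P ! m)) + 2 * (l - 1))"
    by (intro sum_mono class_le)
  moreover have "card (\<Union>m\<in>J. unbuffered (P ! m)) = (\<Sum>m\<in>J. card (unbuffered (P ! m)))"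
  proof (rule card_UN_disjoint)
    show "finite J"
      unfolding J_def by simp
    show "\<forall>m\<in>J. finite (unbuffered (P ! m))"
      using fin unfolding J_def by (auto intro: finite_subset[OF unbuffered_subset])
    show "\<forall>m\<in>J. \<forall>m'\<in>J. m \<noteq> m' \<longrightarrow> unbuffered (P ! m) \<inter> unbuffered (P ! m') = {}"
    proof (intro ballI impI)
      fix m m' assume "m \<in> J" "m' \<in> J" "m \<noteq> m'"
      then have "fst (P ! m) \<inter> fst (P ! m') = {}"
        using part(2) unfolding J_def by simp
      then show "unbuffered (P ! m) \<inter> unbuffered (P ! m') = {}"
        using unbuffered_subset[of "P ! m"] unbuffered_subset[of "P ! m'"] by blast
    qed
  qed
  moreover have "card J = length P - 1"
    unfolding J_def using i by simp
  ultimately show ?thesis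
    unfolding J_def by (simp add: sum.distrib)
qed

section \<open>Moving a vertex into a deficient class\<close>

lemma partition_move_element:
  fixes A A' :: "nat \<Rightarrow> 'a set"
  assumes union: "(\<Union>m<s. A m) = X" and disj: "\<forall>m<s. \<forall>m'<s. m \<noteq> m' \<longrightarrow> A m \<inter> A m' = {}"
    and ij: "i < s" "j < s" "i \<noteq> j" and x: "x \<in> A j"
    and A': "\<forall>m<s. A' m = (if m = i then insert x (A i) else if m = j then A j - {x} else A m)"
  shows "(\<Union>m<s. A' m) = X" "\<forall>m<s. \<forall>m'<s. m \<noteq> m' \<longrightarrow> A' m \<inter> A' m' = {}"
proof -
  have A'_i: "A' i = insert x (A i)"
    using A' ij by simp
  have A'_other: "A' m \<subseteq> A m - {x}" if "m < s" "m \<noteq> i" for m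
    using disj A' ij x that by (cases "m = j") auto
  have "A' m \<subseteq> X" if "m < s" for m
    using union A'_i A'_other[OF that] ij x that by (cases "m = i") auto
  moreover have "X \<subseteq> (\<Union>m<s. A' m)"
  proof
    fix y assume "y \<in> X"
    then obtain m where "m < s" "y \<in> A m"
      using union by blast
    then have "y \<in> A' m \<union> A' i"
      using A'[rule_format, OF \<open>m < s\<close>] A'_i by auto
    then show "y \<in> (\<Union>m<s. A' m)"
      using \<open>m < s\<close> ij(1) by blast
  qed
  ultimately show "(\<Union>m<s. A' m) = X"
    by blast
  show "\<forall>m<s. \<forall>m'<s. m \<noteq> m' \<longrightarrow> A' m \<inter> A' m' = {}"
  proof (intro allI impI)
    fix m m' assume m: "m < s" "m' < s" "m \<noteq> m'"
    consider "m = i" | "m' = i" | "m \<noteq> i" "m' \<noteq> i" by blast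
    then show "A' m \<inter> A' m' = {}"
    proof cases
      case 1
      then have "A' m' \<subseteq> A m' - {x}" "A i \<inter> A m' = {}"
        using A'_other disj m by auto
      then show ?thesis using A'_i 1 by auto
    next
      case 2
      then have "A' m \<subseteq> A m - {x}" "A m \<inter> A i = {}"
        using A'_other disj m by auto
      then show ?thesis using A'_i 2 by auto
    next
      case 3
      then have "A' m \<subseteq> A m" "A' m' \<subseteq> A m'" "A m \<inter> A m' = {}"
        using A'_other disj m by auto
      then show ?thesis by auto
    qed
  qed
qed

lemma deficiency_update_less:
  assumes "i < length P" "j < length P" "i \<noteq> j"
    and "card (fst (P ! i)) < card (fst Ci)" "card (fst (P ! i)) < l - 1" "l - 1 \<le> card (fst Cj)"
  shows "deficiency l (P[i := Ci, j := Cj]) < deficiency l P"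
proof -
  have "l - 1 - card (fst (P[i := Ci, j := Cj] ! m)) \<le> l - 1 - card (fst (P ! m))" for m
    using assms by (cases "m = i"; cases "m = j") auto
  moreover have "l - 1 - card (fst (P[i := Ci, j := Cj] ! i)) < l - 1 - card (fst (P ! i))"
    using assms by simp
  ultimately show ?thesis
    unfolding deficiency_def length_list_update using assms(1) by (intro sum_strict_mono_ex1) auto
qed

text \<open>A class of at most l - 1 vertices can serve as both of its own buffers.\<close>

definition move_vertex ::
  "'a \<Rightarrow> nat \<Rightarrow> nat \<Rightarrow> ('a set \<times> 'a set \<times> 'a set) list \<Rightarrow> ('a set \<times> 'a set \<times> 'a set) list" where
  "move_vertex x j i P = (let S' = insert x (fst (P ! i)) in P[i := (S', S', S'), j := (fst (P ! j) - {x}, snd (P ! j))])"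

lemma length_move_vertex [simp]: "length (move_vertex x j i P) = length P"
  unfolding move_vertex_def Let_def by simp

lemma nth_move_vertex:
  assumes "m < length P" "i \<noteq> j"
  shows "move_vertex x j i P ! m =
    (if m = i then (insert x (fst (P ! i)), insert x (fst (P ! i)), insert x (fst (P ! i)))
     else if m = j then (fst (P ! j) - {x}, snd (P ! j)) else P ! m)"
  using assms unfolding move_vertex_def Let_def by auto

lemma move_vertex_class:
  assumes pre: "presequencing l X B P" and ij: "i < length P" "j < length P" "i \<noteq> j"
    and Pi: "P ! i = (S, S, S)" and small: "card S + 2 \<le> l" and x: "x \<in> unbuffered (P ! j)"
    and indep: "independent X B (insert x S)" and m: "m < length P"
  shows "buffered_set l (move_vertex x j i P ! m) \<and> independent X B (fst (move_vertex x j i P ! m))"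
proof -
  obtain Y L R where Pj: "P ! j = (Y, L, R)"
    by (cases "P ! j") auto
  have xY: "x \<in> Y - (L \<union> R)"
    using x Pj unfolding unbuffered_def by simp
  have "finite S"
    using buffered_setD(1) presequencingD(1)[OF pre ij(1)] Pi by simp
  moreover have "x \<notin> S"
    using unbuffered_notin_other_classes(2)[OF pre ij(2) x ij(1)] ij(3) Pi by simp
  ultimately have "buffered_set l (insert x S, insert x S, insert x S)"
    using buffered_set_small[of "insert x S" l] small by simp
  moreover have "buffered_set l (Y - {x}, L, R)"
    using buffered_set_remove_unbuffered(2) presequencingD(1)[OF pre ij(2)] Pj xY by simp
  moreover have "independent X B (Y - {x})"
    using independent_subset[OF presequencingD(3)[OF pre ij(2)]] Pj by auto
  ultimately show ?thesis
    using nth_move_vertex[OF m ij(3)] Pi Pj indep presequencingD(1,3)[OF pre m] by auto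
qed

lemma move_vertex_junction:
  assumes pre: "presequencing l X B P" and ij: "i < length P" "j < length P" "i \<noteq> j"
    and Pi: "P ! i = (S, S, S)"
    and into_pred: "\<forall>m<length P. (m + 1) mod length P = i \<longrightarrow>
      independent X B (insert x (snd (snd (P ! m)) \<union> S))"
    and into_succ: "independent X B (insert x (S \<union> fst (snd (P ! ((i + 1) mod length P)))))"
    and m: "m < length P"
  shows "independent X B (snd (snd (move_vertex x j i P ! m)) \<union>
    fst (snd (move_vertex x j i P ! ((m + 1) mod length P))))"
proof -
  let ?s = "length P" and ?P' = "move_vertex x j i P"
  have buffers: "snd (?P' ! m') = snd (P ! m')" if "m' < ?s" "m' \<noteq> i" for m'
    using nth_move_vertex[OF that(1) ij(3)] that(2) by auto
  have succ_less: "(m' + 1) mod ?s < ?s" for m'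
    using ij(1) by (intro mod_less_divisor) linarith
  have "(i + 1) mod ?s \<noteq> i"
    using ij by (cases "i + 1 = ?s") auto
  then consider "m = i" | "m \<noteq> i" "(m + 1) mod ?s = i" | "m \<noteq> i" "(m + 1) mod ?s \<noteq> i"
    by blast
  then show ?thesis
  proof cases
    case 1
    then show ?thesis
      using into_succ nth_move_vertex[OF ij(1,3)] Pi buffers[OF succ_less \<open>(i + 1) mod ?s \<noteq> i\<close>]
      by simp
  next
    case 2
    then show ?thesis
      using into_pred m nth_move_vertex[OF ij(1,3)] Pi buffers[OF m] by (simp add: insert_commute)
  next
    case 3
    then show ?thesis
      using presequencingD(4)[OF pre m] buffers[OF m] buffers[OF succ_less] by simp
  qed
qed

lemma presequencing_move_vertex:
  assumes pre: "presequencing l X B P" and ij: "i < length P" "j < length P" "i \<noteq> j"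
    and Pi: "P ! i = (S, S, S)" and small: "card S + 2 \<le> l" and x: "x \<in> unbuffered (P ! j)"
    and into_pred: "\<forall>m<length P. (m + 1) mod length P = i \<longrightarrow>
      independent X B (insert x (snd (snd (P ! m)) \<union> S))"
    and into_succ: "independent X B (insert x (S \<union> fst (snd (P ! ((i + 1) mod length P)))))"
  shows "presequencing l X B (move_vertex x j i P)"
proof -
  have "x \<in> fst (P ! j)"
    using x unbuffered_subset[of "P ! j"] by blast
  moreover have "\<forall>m<length P. fst (move_vertex x j i P ! m) =
      (if m = i then insert x (fst (P ! i)) else if m = j then fst (P ! j) - {x} else fst (P ! m))"
    using nth_move_vertex[of _ P i j x] ij(3) by simp
  ultimately have "(\<Union>m<length P. fst (move_vertex x j i P ! m)) = X"
      "\<forall>m<length P. \<forall>m'<length P. m \<noteq> m' \<longrightarrow>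
        fst (move_vertex x j i P ! m) \<inter> fst (move_vertex x j i P ! m') = {}"
    by (rule partition_move_element[OF presequencing_partition[OF pre] ij])+
  moreover have "independent X B (insert x S)"
    using independent_subset[OF into_succ] by auto
  ultimately show ?thesis
    unfolding presequencing_def Let_def length_move_vertex
    using move_vertex_class[OF pre ij Pi small x] move_vertex_junction[OF pre ij Pi into_pred into_succ]
    by blast
qed

lemma deficiency_move_vertex_less:
  assumes pre: "presequencing l X B P" and ij: "i < length P" "j < length P" "i \<noteq> j"
    and Pi: "P ! i = (S, S, S)" and small: "card S + 2 \<le> l" and x: "x \<in> unbuffered (P ! j)"
  shows "deficiency l (move_vertex x j i P) < deficiency l P"
  unfolding move_vertex_def Let_def
proof (rule deficiency_update_less[OF ij(1,2) ij(3)])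
  have "x \<notin> S" "finite S"
    using unbuffered_notin_other_classes(2)[OF pre ij(2) x ij(1)] ij(3) Pi
      buffered_setD(1) presequencingD(1)[OF pre ij(1)] by auto
  then show "card (fst (P ! i)) < card (fst (insert x (fst (P ! i)), insert x (fst (P ! i)), insert x (fst (P ! i))))"
    using Pi by simp
  show "card (fst (P ! i)) < l - 1"
    using small Pi by simp
  have buf_j: "buffered_set l (fst (P ! j), fst (snd (P ! j)), snd (snd (P ! j)))"
    using presequencingD(1)[OF pre ij(2)] by simp
  moreover have x_j: "x \<in> fst (P ! j) - (fst (snd (P ! j)) \<union> snd (snd (P ! j)))"
    using x unfolding unbuffered_def by (simp split: prod.split_asm)
  ultimately have "2 * l \<le> card (fst (P ! j)) + 1"
    by (rule buffered_set_remove_unbuffered(1))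
  moreover have "Suc (card (fst (P ! j) - {x})) = card (fst (P ! j))"
    using card_Suc_Diff1[OF buffered_setD(1)[OF buf_j]] x_j by blast
  ultimately show "l - 1 \<le> card (fst (fst (P ! j) - {x}, snd (P ! j)))"
    by simp
qed

section \<open>Finding a vertex to move\<close>

lemma add_one_mod_eq_iff:
  fixes s :: nat
  assumes "i < s" "m < s"
  shows "(m + 1) mod s = i \<longleftrightarrow> m = (i + s - 1) mod s"
  using assms by (cases "m + 1 = s"; cases "i = 0") (auto simp: mod_if)

lemma card_dependent_extensions_less_card_unbuffered:
  assumes ps: "partial_system n k t lam X B" and "t < k"
    and pre: "presequencing l X B P" and i: "i < length P" and small: "card (fst (P ! i)) + 2 \<le> l"
    and W: "independent X B W1" "independent X B W2" "fst (P ! i) \<subseteq> W1 \<inter> W2"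
      "card W1 \<le> l - 1 + card (fst (P ! i))" "card W2 \<le> l - 1 + card (fst (P ! i))"
    and hyp: "real n > real lam * (2 * real ((2 * l - 3) choose t) - real ((l - 2) choose t))
                     / real ((k - 1) choose t)
                   + (2 * real (length P) - 1) * (real l - 1) - 1"
  shows "card {x \<in> X - \<Union>{W1, W2}. \<exists>W\<in>{W1, W2}. \<not> independent X B (insert x W)}
    < card (\<Union>m\<in>{..<length P} - {i}. unbuffered (P ! m))"
proof -
  define Bad where "Bad = {x \<in> X - \<Union>{W1, W2}. \<exists>W\<in>{W1, W2}. \<not> independent X B (insert x W)}"
  define M where "M = (\<Union>m\<in>{..<length P} - {i}. unbuffered (P ! m))"
  define Q where "Q = 2 * real ((2 * l - 3) choose t) - real ((l - 2) choose t)"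
  have "finite X" and card_X: "card X = n"
    using ps unfolding partial_system_def by simp_all
  then have fin_W: "finite W1" "finite W2"
    using W(1,2) finite_subset unfolding independent_def by auto
  define TT where "TT = {T. card T = t \<and> (\<exists>W\<in>{W1, W2}. T \<subseteq> W)}"
  have "TT = {T. card T = t \<and> (T \<subseteq> W1 \<or> T \<subseteq> W2)}" "l - 1 + (l - 2) = 2 * l - 3"
    using small unfolding TT_def by auto
  then have "card TT + ((l - 2) choose t) \<le> 2 * ((2 * l - 3) choose t)"
    using card_subsets_Un_le[OF fin_W W(3-5), of "l - 2" t] small by simp
  then have "real (card TT + ((l - 2) choose t)) \<le> real (2 * ((2 * l - 3) choose t))"
    by (rule of_nat_mono)
  then have "real (card TT) \<le> Q"
    unfolding Q_def by simp
  moreover have "card Bad * ((k - 1) choose t) \<le> card TT * lam"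
    unfolding Bad_def TT_def by (rule card_dependent_extensions_le[OF ps]) (use W(1,2) in simp)
  ultimately have "real (card Bad) * real ((k - 1) choose t) \<le> Q * real lam"
    by (metis of_nat_le_iff of_nat_mult mult_right_mono of_nat_0_le_iff order_trans)
  moreover have "0 < (k - 1) choose t"
    using \<open>t < k\<close> by simp
  ultimately have bad: "real (card Bad) \<le> real lam * Q / real ((k - 1) choose t)"
    by (simp add: pos_le_divide_eq mult.commute)
  have "n \<le> card M + card (fst (P ! i)) + (length P - 1) * (2 * (l - 1))"
    unfolding M_def using card_le_card_unbuffered[OF pre i] card_X by simp
  then have "real n \<le> real (card M + card (fst (P ! i)) + (length P - 1) * (2 * (l - 1)))"
    by (rule of_nat_mono)
  moreover have "1 \<le> length P" "1 \<le> l"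
    using i small by linarith+
  ultimately have "real n \<le> real (card M) + (real l - 2) + (real (length P) - 1) * (2 * (real l - 1))"
    using small by simp
  then show ?thesis
    using hyp bad unfolding Bad_def[symmetric] M_def[symmetric] Q_def[symmetric]
    by (simp add: algebra_simps)
qed

lemma exists_movable_vertex:
  assumes ps: "partial_system n k t lam X B" and "t < k"
    and pre: "presequencing l X B P" and i: "i < length P"
    and Pi: "P ! i = (S, S, S)" and small: "card S + 2 \<le> l"
    and hyp: "real n > real lam * (2 * real ((2 * l - 3) choose t) - real ((l - 2) choose t))
                     / real ((k - 1) choose t)
                   + (2 * real (length P) - 1) * (real l - 1) - 1"
  shows "\<exists>j x. j < length P \<and> i \<noteq> j \<and> x \<in> unbuffered (P ! j) \<and>
    (\<forall>m<length P. (m + 1) mod length P = i \<longrightarrow> independent X B (insert x (snd (snd (P ! m)) \<union> S))) \<and>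
    independent X B (insert x (S \<union> fst (snd (P ! ((i + 1) mod length P)))))"
proof -
  let ?s = "length P"
  define a where "a = (i + ?s - 1) mod ?s"
  define c where "c = (i + 1) mod ?s"
  have "a < ?s" "c < ?s"
    using i unfolding a_def c_def by (intro mod_less_divisor, linarith)+
  have pred: "(m + 1) mod ?s = i \<longleftrightarrow> m = a" if "m < ?s" for m
    unfolding a_def using add_one_mod_eq_iff[OF i that] .
  define W1 where "W1 = snd (snd (P ! a)) \<union> S"
  define W2 where "W2 = S \<union> fst (snd (P ! c))"
  have indep: "independent X B W1" "independent X B W2"
    using presequencingD(4)[OF pre \<open>a < ?s\<close>] presequencingD(4)[OF pre i] pred[OF \<open>a < ?s\<close>] Pi
    unfolding W1_def W2_def c_def by simp_all
  have "card W1 \<le> l - 1 + card S" "card W2 \<le> l - 1 + card S"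
    using presequencing_card_buffers[OF pre \<open>a < ?s\<close>] presequencing_card_buffers[OF pre \<open>c < ?s\<close>]
      card_Un_le[of "snd (snd (P ! a))" S] card_Un_le[of S "fst (snd (P ! c))"]
    unfolding W1_def W2_def by linarith+
  moreover have "fst (P ! i) \<subseteq> W1 \<inter> W2" "card (fst (P ! i)) + 2 \<le> l"
    using Pi small unfolding W1_def W2_def by auto
  ultimately have "card {x \<in> X - \<Union>{W1, W2}. \<exists>W\<in>{W1, W2}. \<not> independent X B (insert x W)}
      < card (\<Union>m\<in>{..<?s} - {i}. unbuffered (P ! m))" (is "card ?Bad < card ?M")
    using card_dependent_extensions_less_card_unbuffered[OF ps \<open>t < k\<close> pre i _ indep] hyp Pi by simp
  moreover have "finite ?Bad"
    using ps unfolding partial_system_def by simp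
  ultimately obtain x where "x \<in> ?M" "x \<notin> ?Bad"
    by (meson card_mono not_le subsetI)
  then obtain j where j: "j < ?s" "j \<noteq> i" "x \<in> unbuffered (P ! j)"
    by blast
  have "x \<in> X"
    using presequencingD(2)[OF pre j(1)] unbuffered_subset[of "P ! j"] j(3) by blast
  moreover have "x \<notin> snd (snd (P ! a))" "x \<notin> fst (snd (P ! c))"
    using unbuffered_notin_other_classes(1)[OF pre j(1) j(3)] \<open>a < ?s\<close> \<open>c < ?s\<close> by blast+
  moreover have "x \<notin> S"
    using unbuffered_notin_other_classes(2)[OF pre j(1) j(3) i] j(2) Pi by simp
  ultimately have "x \<in> X - (W1 \<union> W2)"
    unfolding W1_def W2_def by simp
  then have "independent X B (insert x W1)" "independent X B (insert x W2)"
    using \<open>x \<notin> ?Bad\<close> by auto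
  then show ?thesis
    using j pred unfolding W1_def W2_def c_def by auto
qed

lemma presequencing_reduce_deficiency:
  assumes ps: "partial_system n k t lam X B" and "t < k"
    and pre: "presequencing l X B P" and i: "i < length P" and "deficient l (P ! i)"
    and hyp: "real n > real lam * (2 * real ((2 * l - 3) choose t) - real ((l - 2) choose t))
                     / real ((k - 1) choose t)
                   + (2 * real (length P) - 1) * (real l - 1) - 1"
  shows "\<exists>P'. length P' = length P \<and> presequencing l X B P' \<and> deficiency l P' < deficiency l P"
proof -
  define S where "S = fst (P ! i)"
  have small: "card S + 2 \<le> l"
    using \<open>deficient l (P ! i)\<close> unfolding S_def deficient_iff .
  moreover have "buffered_set l (S, fst (snd (P ! i)), snd (snd (P ! i)))"
    using presequencingD(1)[OF pre i] unfolding S_def by simp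
  ultimately have Pi: "P ! i = (S, S, S)"
    using buffered_set_deficient unfolding S_def by (metis prod.collapse)
  obtain j x where j: "j < length P" "i \<noteq> j" and x: "x \<in> unbuffered (P ! j)"
    and into: "\<forall>m<length P. (m + 1) mod length P = i \<longrightarrow> independent X B (insert x (snd (snd (P ! m)) \<union> S))"
      "independent X B (insert x (S \<union> fst (snd (P ! ((i + 1) mod length P)))))"
    using exists_movable_vertex[OF ps \<open>t < k\<close> pre i Pi small hyp] by blast
  have "presequencing l X B (move_vertex x j i P)"
    using presequencing_move_vertex[OF pre i j Pi small x into] .
  moreover have "deficiency l (move_vertex x j i P) < deficiency l P"
    using deficiency_move_vertex_less[OF pre i j Pi small x] .
  ultimately show ?thesis
    by (intro exI[of _ "move_vertex x j i P"]) simp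
qed

theorem lemma6:
  fixes n k t lam l s :: nat and X :: "'a set" and B :: "'a set multiset"
  assumes "n \<ge> k" and "k > t" and "t \<ge> 2" and "lam > 0"
    and "l > 0" and "s > 0"
    and "partial_system n k t lam X B"
    and "\<exists>P. length P = s \<and> presequencing l X B P"
    and "real n > real lam * (2 * real ((2 * l - 3) choose t) - real ((l - 2) choose t))
                     / real ((k - 1) choose t)
                   + (2 * real s - 1) * (real l - 1) - 1"
  shows "\<exists>P. length P = s \<and> nondeficient_presequencing l X B P"
proof -
  obtain P0 where "length P0 = s" "presequencing l X B P0"
    using assms(8) by blast
  then obtain P where P: "length P = s" "presequencing l X B P"
    and least: "\<And>P'. length P' = s \<and> presequencing l X B P' \<Longrightarrow> deficiency l P \<le> deficiency l P'"
    using ex_has_least_nat[of "\<lambda>P. length P = s \<and> presequencing l X B P" P0 "deficiency l"] by blast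
  have "\<not> deficient l (P ! i)" if i: "i < s" for i
  proof
    assume "deficient l (P ! i)"
    then obtain P' where "length P' = s" "presequencing l X B P'" "deficiency l P' < deficiency l P"
      using presequencing_reduce_deficiency[OF assms(7) assms(2) P(2)] P(1) i assms(9) by auto
    then show False
      using least[of P'] by simp
  qed
  then show ?thesis
    using P unfolding nondeficient_presequencing_def by blast
qed

end
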